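(* For $A\in\mathbb{R}^{m\times N}$ and $K\subseteq[N]$ the following are equivalent: (i) every $x_0\in\{0,1\}^N$ with $\operatorname{supp}x_0\subseteq K$ is the unique solution of $(P_{\mathrm{bin}})$ with $b=Ax_0$; (ii) every $x_0\in[0,1]^N$ with $\operatorname{supp}x_0\subseteq K$ is the unique solution of $(P_{\mathrm{bin}})$ with $b=Ax_0$; (iii) $\ker(A)\cap N^+\cap H_K^+=\{0\}$, where $H^+_K=\{w\in\mathbb{R}^N: w_i\ge 0 \text{ for } i\in [N]\setminus K\}$ and $N^+=\{w\in\mathbb{R}^N: \sum_{i=1}^N w_i\le 0\}$.
   Context: $[N]=\{1,\dots,N\}$. $(P_{\mathrm{bin}})$ is the program $\min\|x\|_1$ subject to $Ax=b$ and $x\in[0,1]^N$; "unique solution" means unique minimizer. *)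

theory Defs
  imports "HOL-Analysis.Analysis"
begin

definition l1norm :: "real ^ 'n \<Rightarrow> real" where
  "l1norm x = (\<Sum>i\<in>UNIV. \<bar>x $ i\<bar>)"

definition feasible_bin :: "real ^ 'n ^ 'm \<Rightarrow> real ^ 'm \<Rightarrow> real ^ 'n \<Rightarrow> bool" where
  "feasible_bin A b x \<longleftrightarrow> A *v x = b \<and> (\<forall>i. 0 \<le> x $ i \<and> x $ i \<le> 1)"

definition unique_sol_Pbin :: "real ^ 'n ^ 'm \<Rightarrow> real ^ 'm \<Rightarrow> real ^ 'n \<Rightarrow> bool" where
  "unique_sol_Pbin A b x \<longleftrightarrow> feasible_bin A b x \<and>
     (\<forall>z. feasible_bin A b z \<and> z \<noteq> x \<longrightarrow> l1norm x < l1norm z)"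

definition supp_vec :: "real ^ 'n \<Rightarrow> 'n set" where
  "supp_vec x = {i. x $ i \<noteq> 0}"

definition kerA :: "real ^ 'n ^ 'm \<Rightarrow> (real ^ 'n) set" where
  "kerA A = {w. A *v w = 0}"

definition Nplus :: "(real ^ 'n) set" where
  "Nplus = {w. (\<Sum>i\<in>UNIV. w $ i) \<le> 0}"

definition HKplus :: "'n set \<Rightarrow> (real ^ 'n) set" where
  "HKplus K = {w. \<forall>i. i \<notin> K \<longrightarrow> 0 \<le> w $ i}"

end

theory Submission
  imports Defs
begin

text \<open>On the box [0,1]^N the l1-norm is the linear functional w \<mapsto> \<Sum>i. w i, so x0 is the
  unique minimiser exactly when every nonzero feasible direction w \<in> ker A strictly increases
  this sum. Off K every feasible direction is nonnegative, which gives (iii) \<Longrightarrow> (ii). Conversely a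
  nonzero w \<in> ker A \<inter> N^+ \<inter> H_K^+ is, after scaling, a feasible direction at the binary point
  x0 = indicator of {i. w i < 0} (supported in K since w \<in> H_K^+) that does not increase the sum,
  so (i) fails.\<close>

lemma l1norm_eq_sum_if_nonneg:
  assumes "\<forall>i. 0 \<le> x $ i"
  shows "l1norm x = (\<Sum>i\<in>UNIV. x $ i)"
  unfolding l1norm_def using assms by (intro sum.cong) auto

lemma unique_sol_Pbin_iff_feasible_directions_ascend:
  fixes A :: "real ^ 'n ^ 'm"
  assumes x0: "\<forall>i. x0 $ i \<in> {0..1}"
  shows "unique_sol_Pbin A (A *v x0) x0 \<longleftrightarrow>
    (\<forall>w \<in> kerA A. w \<noteq> 0 \<and> (\<forall>i. x0 $ i + w $ i \<in> {0..1}) \<longrightarrow> 0 < (\<Sum>i\<in>UNIV. w $ i))"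
proof -
  have feasible_iff: "feasible_bin A (A *v x0) (x0 + w) \<longleftrightarrow>
      w \<in> kerA A \<and> (\<forall>i. x0 $ i + w $ i \<in> {0..1})" for w
    by (simp add: feasible_bin_def kerA_def matrix_vector_right_distrib)
  have l1_diff: "l1norm x0 < l1norm (x0 + w) \<longleftrightarrow> 0 < (\<Sum>i\<in>UNIV. w $ i)"
    if "\<forall>i. x0 $ i + w $ i \<in> {0..1}" for w
    using x0 that by (simp add: l1norm_eq_sum_if_nonneg sum.distrib)
  have "unique_sol_Pbin A (A *v x0) x0 \<longleftrightarrow>
      (\<forall>w. feasible_bin A (A *v x0) (x0 + w) \<and> w \<noteq> 0 \<longrightarrow> l1norm x0 < l1norm (x0 + w))"
    using x0 unfolding unique_sol_Pbin_def feasible_bin_def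
    by (metis add_diff_cancel_left' atLeastAtMost_iff diff_add_cancel diff_self)
  then show ?thesis
    using feasible_iff l1_diff by auto
qed

lemma unique_sol_Pbin_if_cone_trivial:
  fixes A :: "real ^ 'n ^ 'm"
  assumes cone: "kerA A \<inter> Nplus \<inter> HKplus K = {0}"
    and x0: "\<forall>i. x0 $ i \<in> {0..1}" and supp: "supp_vec x0 \<subseteq> K"
  shows "unique_sol_Pbin A (A *v x0) x0"
  unfolding unique_sol_Pbin_iff_feasible_directions_ascend[OF x0]
proof (intro ballI impI)
  fix w assume w: "w \<in> kerA A" "w \<noteq> 0 \<and> (\<forall>i. x0 $ i + w $ i \<in> {0..1})"
  have "0 \<le> w $ i" if "i \<notin> K" for i
  proof -
    have "x0 $ i = 0"
      using supp that by (auto simp: supp_vec_def)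
    then show ?thesis
      using w(2) by (metis add_0 atLeastAtMost_iff)
  qed
  then have "w \<in> HKplus K"
    by (simp add: HKplus_def)
  with cone w show "0 < (\<Sum>i\<in>UNIV. w $ i)"
    by (auto simp: Nplus_def)
qed

lemma indicator_neg_plus_small_in_unit_interval:
  fixes c t :: real
  assumes "0 < t" "t * \<bar>c\<bar> \<le> 1"
  shows "(if c < 0 then 1 else 0) + t * c \<in> {0..1}"
  using assms by (cases "c < 0") (auto simp: abs_if mult_pos_neg less_imp_le)

lemma cone_trivial_if_unique_sol_binary:
  fixes A :: "real ^ 'n ^ 'm"
  assumes binary: "\<forall>x0. (\<forall>i. x0 $ i \<in> {0, 1}) \<and> supp_vec x0 \<subseteq> K \<longrightarrow> unique_sol_Pbin A (A *v x0) x0"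
  shows "kerA A \<inter> Nplus \<inter> HKplus K = {0}"
proof (rule ccontr)
  assume "kerA A \<inter> Nplus \<inter> HKplus K \<noteq> {0}"
  moreover have "0 \<in> kerA A \<inter> Nplus \<inter> HKplus K"
    by (auto simp: kerA_def Nplus_def HKplus_def)
  ultimately obtain w where w: "w \<in> kerA A" "w \<in> Nplus" "w \<in> HKplus K" "w \<noteq> 0"
    by blast
  define x0 :: "real ^ 'n" where "x0 = (\<chi> i. if w $ i < 0 then 1 else 0)"
  define t where "t = 1 / (1 + norm w)"
  have t: "0 < t" "t * \<bar>w $ i\<bar> \<le> 1" for i
    using component_le_norm_cart[of w i] by (auto simp: t_def field_simps)
  have "supp_vec x0 \<subseteq> K"
    using w(3) by (auto simp: x0_def supp_vec_def HKplus_def not_le)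
  then have "unique_sol_Pbin A (A *v x0) x0"
    using binary by (simp add: x0_def)
  moreover have "\<forall>i. x0 $ i \<in> {0..1}"
    by (simp add: x0_def)
  moreover have "t *\<^sub>R w \<in> kerA A" "t *\<^sub>R w \<noteq> 0"
    using w t by (auto simp: kerA_def matrix_vector_mult_scaleR)
  moreover have "\<forall>i. x0 $ i + (t *\<^sub>R w) $ i \<in> {0..1}"
    using t indicator_neg_plus_small_in_unit_interval by (simp add: x0_def)
  ultimately have "0 < (\<Sum>i\<in>UNIV. (t *\<^sub>R w) $ i)"
    using unique_sol_Pbin_iff_feasible_directions_ascend by blast
  then have "0 < t * (\<Sum>i\<in>UNIV. w $ i)"
    by (simp add: sum_distrib_left)
  moreover have "(\<Sum>i\<in>UNIV. w $ i) \<le> 0"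
    using w(2) by (simp add: Nplus_def)
  ultimately show False
    using t(1) by (simp add: mult_le_0_iff zero_less_mult_iff)
qed

theorem theorem2p6:
  fixes A :: "real ^ 'n ^ 'm" and K :: "'n set"
  shows "((\<forall>x0. (\<forall>i. x0 $ i \<in> {0, 1}) \<and> supp_vec x0 \<subseteq> K \<longrightarrow> unique_sol_Pbin A (A *v x0) x0)
          \<longleftrightarrow> (\<forall>x0. (\<forall>i. x0 $ i \<in> {0..1}) \<and> supp_vec x0 \<subseteq> K \<longrightarrow> unique_sol_Pbin A (A *v x0) x0))
       \<and> ((\<forall>x0. (\<forall>i. x0 $ i \<in> {0..1}) \<and> supp_vec x0 \<subseteq> K \<longrightarrow> unique_sol_Pbin A (A *v x0) x0)
          \<longleftrightarrow> kerA A \<inter> Nplus \<inter> HKplus K = {0})"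
proof -
  have "{0, 1} \<subseteq> {0..1::real}"
    by auto
  then have ii_imp_i: "(\<forall>x0. (\<forall>i. x0 $ i \<in> {0..1}) \<and> supp_vec x0 \<subseteq> K \<longrightarrow> unique_sol_Pbin A (A *v x0) x0)
      \<Longrightarrow> (\<forall>x0. (\<forall>i. x0 $ i \<in> {0, 1}) \<and> supp_vec x0 \<subseteq> K \<longrightarrow> unique_sol_Pbin A (A *v x0) x0)"
    by blast
  show ?thesis
    using ii_imp_i cone_trivial_if_unique_sol_binary[of K A] unique_sol_Pbin_if_cone_trivial[of A K]
    by blast
qed

end
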